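(* Let $\Gamma$ be a distance-regular graph with diameter $D\ge 3$ and valency $k$, and assume $a_i=0$ for $0\le i\le D-2$ and $a_{D-1}\neq 0$. Let $M$ be the $D\times D$ tridiagonal matrix with rows and columns indexed by $0,1,\dots,D-1$, whose diagonal is $(0,0,\dots,0,k-c_{D-1})$, whose superdiagonal entries are $M_{i,i+1}=b_i$ ($0\le i\le D-2$) and whose subdiagonal entries are $M_{i,i-1}=c_i$ ($1\le i\le D-1$). Then: (i) for every $\theta\in\mathbb{R}$ the pair $\theta,k$ is tight; (ii) for every real number $\theta$ that is an eigenvalue of $M$, the pair $\theta,-k$ is tight; (iii) $\Gamma$ has no further tight pairs, i.e. if $\theta,\theta'\in\mathbb{R}$ form a tight pair then either one of them equals $k$, or one of them equals $-k$ and the other is an eigenvalue of $M$.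
   Context: $\Gamma$ is a finite connected undirected graph without loops or multiple edges, distance-regular with diameter $D$, intersection numbers $a_i,b_i,c_i$ ($c_0=0$, $b_D=0$, $c_1=1$), valency $k=b_0$, and $c_i+a_i+b_i=k$ for $0\le i\le D$. For $\theta\in\mathbb{R}$, the pseudo cosine sequence for $\theta$ is the sequence of reals $\sigma_0,\dots,\sigma_D$ with $\sigma_0=1$ and $c_i\sigma_{i-1}+a_i\sigma_i+b_i\sigma_{i+1}=\theta\sigma_i$ for $0\le i\le D-1$. Two pseudo cosine sequences $\sigma_i$, $\rho_i$ form a tight pair if $(\sigma_i\rho_i)_{i=0}^D$ is a pseudo cosine sequence; reals $\theta,\theta'$ form a tight pair if their pseudo cosine sequences do. *)

theory Defs
  imports Main "HOL-Library.Multiset" "Jordan_Normal_Form.Char_Poly"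
begin

definition walk :: "('v \<Rightarrow> 'v \<Rightarrow> bool) \<Rightarrow> 'v \<Rightarrow> 'v \<Rightarrow> nat \<Rightarrow> bool" where
  "walk E x y n \<longleftrightarrow> (\<exists>p :: nat \<Rightarrow> 'v. p 0 = x \<and> p n = y \<and> (\<forall>i<n. E (p i) (p (Suc i))))"

text \<open>Path-length distance (meaningful for connected graphs).\<close>
definition gdist :: "('v \<Rightarrow> 'v \<Rightarrow> bool) \<Rightarrow> 'v \<Rightarrow> 'v \<Rightarrow> nat" where
  "gdist E x y = (LEAST n. walk E x y n)"

definition fin_conn_graph :: "'v set \<Rightarrow> ('v \<Rightarrow> 'v \<Rightarrow> bool) \<Rightarrow> bool" where
  "fin_conn_graph V E \<longleftrightarrow> finite V \<and> V \<noteq> {} \<and>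
     (\<forall>x y. E x y \<longrightarrow> x \<in> V \<and> y \<in> V) \<and>
     (\<forall>x y. E x y \<longrightarrow> E y x) \<and> (\<forall>x. \<not> E x x) \<and>
     (\<forall>x\<in>V. \<forall>y\<in>V. \<exists>n. walk E x y n)"

definition diameter :: "'v set \<Rightarrow> ('v \<Rightarrow> 'v \<Rightarrow> bool) \<Rightarrow> nat" where
  "diameter V E = Max {gdist E x y | x y. x \<in> V \<and> y \<in> V}"

definition distance_regular ::
  "'v set \<Rightarrow> ('v \<Rightarrow> 'v \<Rightarrow> bool) \<Rightarrow> nat \<Rightarrow> nat \<Rightarrow> (nat \<Rightarrow> nat) \<Rightarrow> (nat \<Rightarrow> nat) \<Rightarrow> (nat \<Rightarrow> nat) \<Rightarrow> bool" where
  "distance_regular V E D k a b c \<longleftrightarrow> fin_conn_graph V E \<and> D = diameter V E \<and>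
     (\<forall>x\<in>V. card {z\<in>V. E x z} = k) \<and>
     (\<forall>x\<in>V. \<forall>y\<in>V.
        card {z\<in>V. E y z \<and> Suc (gdist E x z) = gdist E x y} = c (gdist E x y) \<and>
        card {z\<in>V. E y z \<and> gdist E x z = gdist E x y} = a (gdist E x y) \<and>
        card {z\<in>V. E y z \<and> gdist E x z = Suc (gdist E x y)} = b (gdist E x y))"

text \<open>Pseudo cosine sequence for theta (only indices 0..D matter).\<close>
definition pseudo_cosine ::
  "nat \<Rightarrow> (nat \<Rightarrow> nat) \<Rightarrow> (nat \<Rightarrow> nat) \<Rightarrow> (nat \<Rightarrow> nat) \<Rightarrow> real \<Rightarrow> (nat \<Rightarrow> real) \<Rightarrow> bool" where
  "pseudo_cosine D a b c \<theta> \<sigma> \<longleftrightarrow> \<sigma> 0 = 1 \<and>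
     (\<forall>i<D. real (c i) * (if i = 0 then 0 else \<sigma> (i - 1)) + real (a i) * \<sigma> i
              + real (b i) * \<sigma> (Suc i) = \<theta> * \<sigma> i)"

definition tight_seqs ::
  "nat \<Rightarrow> (nat \<Rightarrow> nat) \<Rightarrow> (nat \<Rightarrow> nat) \<Rightarrow> (nat \<Rightarrow> nat) \<Rightarrow> (nat \<Rightarrow> real) \<Rightarrow> (nat \<Rightarrow> real) \<Rightarrow> bool" where
  "tight_seqs D a b c \<sigma> \<rho> \<longleftrightarrow> (\<exists>\<eta>. pseudo_cosine D a b c \<eta> (\<lambda>i. \<sigma> i * \<rho> i))"

definition tight_pair ::
  "nat \<Rightarrow> (nat \<Rightarrow> nat) \<Rightarrow> (nat \<Rightarrow> nat) \<Rightarrow> (nat \<Rightarrow> nat) \<Rightarrow> real \<Rightarrow> real \<Rightarrow> bool" where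
  "tight_pair D a b c \<theta> \<theta>' \<longleftrightarrow> (\<exists>\<sigma> \<rho>. pseudo_cosine D a b c \<theta> \<sigma> \<and> pseudo_cosine D a b c \<theta>' \<rho>
      \<and> tight_seqs D a b c \<sigma> \<rho>)"

definition matM :: "nat \<Rightarrow> nat \<Rightarrow> (nat \<Rightarrow> nat) \<Rightarrow> (nat \<Rightarrow> nat) \<Rightarrow> real mat" where
  "matM D k b c = mat D D (\<lambda>(i, j).
      if i = j then (if i = D - 1 then real k - real (c (D - 1)) else 0)
      else if j = Suc i then real (b i)
      else if i = Suc j then real (c i)
      else 0)"

end

theory Submission
  imports Defs
begin

(* With a_i = 0 for i < D - 1, rows 0 and 1 of the recurrences of sigma, rho and of their
   product sigma rho force k (1 - sigma_1^2) (1 - rho_1^2) = 0, so one member of a tight pair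
   is k or -k.  The constant sequence 1 belongs to k, and its product with any sequence is
   that sequence, so every theta is tight with k.  The sequence nu of -k alternates in sign
   below D; multiplying a sequence rho of theta by nu yields the recurrence of -theta, up to
   a defect 2 a_(D-1) (rho_D - rho_(D-1)) in the last row.  As a_(D-1) > 0, theta and -k are
   tight iff rho_D = rho_(D-1), which says that (rho_0, ..., rho_(D-1)) is an eigenvector
   of M for theta. *)

section \<open>Walks and distances\<close>

lemma walk_0_iff: "walk E x y 0 \<longleftrightarrow> x = y"
  unfolding walk_def by auto

lemma walk_1_iff: "walk E x y 1 \<longleftrightarrow> E x y"
  unfolding walk_def
  by (auto intro!: exI[of _ "\<lambda>i. if i = 0 then x else y"])

lemma walk_append:
  assumes "walk E x y m" and "walk E y z n"
  shows "walk E x z (m + n)"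
proof -
  obtain p where p: "p 0 = x" "p m = y" "\<forall>i<m. E (p i) (p (Suc i))"
    using assms(1) unfolding walk_def by blast
  obtain q where q: "q 0 = y" "q n = z" "\<forall>i<n. E (q i) (q (Suc i))"
    using assms(2) unfolding walk_def by blast
  define r where "r j = (if j \<le> m then p j else q (j - m))" for j
  have "E (r i) (r (Suc i))" if "i < m + n" for i
  proof (cases "i < m")
    case False
    then have "Suc i - m = Suc (i - m)" by simp
    then show ?thesis using False that p q by (cases "i = m") (auto simp: r_def)
  qed (use p in \<open>simp add: r_def\<close>)
  moreover have "r 0 = x" "r (m + n) = z" using p q by (auto simp: r_def)
  ultimately show ?thesis unfolding walk_def by blast
qed

lemma walk_gdist: "walk E x y n \<Longrightarrow> walk E x y (gdist E x y)"
  unfolding gdist_def by (rule LeastI)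

lemma gdist_le: "walk E x y n \<Longrightarrow> gdist E x y \<le> n"
  unfolding gdist_def by (rule Least_le)

lemma gdist_self: "gdist E x x = 0"
  using gdist_le[of E x x 0] by (simp add: walk_0_iff)

lemma gdist_eq_0D: "walk E x y n \<Longrightarrow> gdist E x y = 0 \<Longrightarrow> x = y"
  using walk_gdist walk_0_iff by metis

lemma gdist_adjacent_le:
  assumes "walk E x y n" and "E y z"
  shows "gdist E x z \<le> Suc (gdist E x y)"
  using gdist_le walk_append[OF walk_gdist[OF assms(1)]] assms(2)
  by (metis Suc_eq_plus1 walk_1_iff)

lemma fin_conn_graph_geodesic:
  assumes "fin_conn_graph V E"
  obtains x p where "x \<in> V" "\<And>j. j \<le> diameter V E \<Longrightarrow> p j \<in> V \<and> gdist E x (p j) = j"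
    "\<And>j. j < diameter V E \<Longrightarrow> E (p j) (p (Suc j))"
proof -
  have "finite V" "V \<noteq> {}" and edge_in_V: "\<And>x y. E x y \<Longrightarrow> x \<in> V \<and> y \<in> V"
    and conn: "\<And>x y. x \<in> V \<Longrightarrow> y \<in> V \<Longrightarrow> \<exists>n. walk E x y n"
    using assms unfolding fin_conn_graph_def by auto
  let ?D = "diameter V E"
  have "{gdist E x y | x y. x \<in> V \<and> y \<in> V} = (\<lambda>(x, y). gdist E x y) ` (V \<times> V)"
    by auto
  with \<open>finite V\<close> \<open>V \<noteq> {}\<close> have "?D \<in> {gdist E x y | x y. x \<in> V \<and> y \<in> V}"
    unfolding diameter_def by (intro Max_in) auto
  then obtain x w where "x \<in> V" "w \<in> V" and xw: "gdist E x w = ?D" by auto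
  then have "walk E x w ?D" using walk_gdist conn by metis
  then obtain p where p: "p 0 = x" "p ?D = w" "\<forall>i<?D. E (p i) (p (Suc i))"
    unfolding walk_def by blast
  have p_in_V: "p j \<in> V" if "j \<le> ?D" for j
  proof (cases j)
    case (Suc i)
    then have "E (p i) (p j)" using p(3) that by simp
    then show ?thesis using edge_in_V by blast
  qed (use p \<open>x \<in> V\<close> in simp)
  have "gdist E x (p j) = j" if "j \<le> ?D" for j
  proof -
    have to_pj: "walk E x (p j) j"
      unfolding walk_def using p that by (intro exI[of _ p]) auto
    moreover have "walk E (p j) w (?D - j)"
      unfolding walk_def using p that by (intro exI[of _ "\<lambda>t. p (j + t)"]) auto
    ultimately have "?D \<le> gdist E x (p j) + (?D - j)"
      using xw walk_append walk_gdist gdist_le by metis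
    moreover have "gdist E x (p j) \<le> j"
      using to_pj gdist_le by metis
    ultimately show ?thesis using that by linarith
  qed
  with p_in_V p(3) \<open>x \<in> V\<close> show thesis using that by blast
qed

section \<open>Intersection numbers\<close>

lemma
  assumes "distance_regular V E D k a b c"
  shows distance_regular_fin_conn_graph: "fin_conn_graph V E"
    and distance_regular_diameter: "D = diameter V E"
    and distance_regular_valency: "x \<in> V \<Longrightarrow> card {z\<in>V. E x z} = k"
    and distance_regular_c: "x \<in> V \<Longrightarrow> y \<in> V \<Longrightarrow>
      card {z\<in>V. E y z \<and> Suc (gdist E x z) = gdist E x y} = c (gdist E x y)"
    and distance_regular_a: "x \<in> V \<Longrightarrow> y \<in> V \<Longrightarrow>
      card {z\<in>V. E y z \<and> gdist E x z = gdist E x y} = a (gdist E x y)"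
    and distance_regular_b: "x \<in> V \<Longrightarrow> y \<in> V \<Longrightarrow>
      card {z\<in>V. E y z \<and> gdist E x z = Suc (gdist E x y)} = b (gdist E x y)"
  using assms unfolding distance_regular_def by blast+

lemma distance_regular_intersection_sum:
  assumes drg: "distance_regular V E D k a b c" and "x \<in> V" "y \<in> V"
  shows "c (gdist E x y) + a (gdist E x y) + b (gdist E x y) = k"
proof -
  have "finite V" and adj_sym: "\<And>x y. E x y \<Longrightarrow> E y x"
    and conn: "\<And>x y. x \<in> V \<Longrightarrow> y \<in> V \<Longrightarrow> \<exists>n. walk E x y n"
    using distance_regular_fin_conn_graph[OF drg] unfolding fin_conn_graph_def by auto
  let ?d = "gdist E x"
  let ?C = "{z\<in>V. E y z \<and> Suc (?d z) = ?d y}"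
  let ?A = "{z\<in>V. E y z \<and> ?d z = ?d y}"
  let ?B = "{z\<in>V. E y z \<and> ?d z = Suc (?d y)}"
  have "Suc (?d z) = ?d y \<or> ?d z = ?d y \<or> ?d z = Suc (?d y)"
    if z: "z \<in> V" "E y z" for z
  proof -
    obtain m n where "walk E x y m" "walk E x z n" using conn z \<open>x \<in> V\<close> \<open>y \<in> V\<close> by metis
    then have "?d z \<le> Suc (?d y)" "?d y \<le> Suc (?d z)"
      using gdist_adjacent_le z(2) adj_sym by metis+
    then show ?thesis by presburger
  qed
  then have "{z\<in>V. E y z} = ?C \<union> ?A \<union> ?B" by auto
  then have "k = card (?C \<union> ?A \<union> ?B)"
    using distance_regular_valency[OF drg \<open>y \<in> V\<close>] by simp
  also have "\<dots> = card ?C + card ?A + card ?B"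
    using \<open>finite V\<close> by (simp add: card_Un_disjoint disjoint_iff)
  finally show ?thesis
    using distance_regular_c[OF drg \<open>x \<in> V\<close> \<open>y \<in> V\<close>]
      distance_regular_a[OF drg \<open>x \<in> V\<close> \<open>y \<in> V\<close>]
      distance_regular_b[OF drg \<open>x \<in> V\<close> \<open>y \<in> V\<close>] by simp
qed

lemma distance_regular_geodesic:
  assumes "distance_regular V E D k a b c"
  obtains x p where "x \<in> V" "\<And>j. j \<le> D \<Longrightarrow> p j \<in> V \<and> gdist E x (p j) = j"
    "\<And>j. j < D \<Longrightarrow> E (p j) (p (Suc j))"
  using fin_conn_graph_geodesic distance_regular_fin_conn_graph[OF assms]
    distance_regular_diameter[OF assms] by metis

lemma distance_regular_c_0:
  assumes drg: "distance_regular V E D k a b c"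
  shows "c 0 = 0"
proof -
  obtain x where "x \<in> V" using distance_regular_geodesic[OF drg] by metis
  then show ?thesis using distance_regular_c[OF drg \<open>x \<in> V\<close> \<open>x \<in> V\<close>] by (simp add: gdist_self)
qed

lemma distance_regular_abc_sum:
  assumes drg: "distance_regular V E D k a b c" and "i \<le> D"
  shows "c i + a i + b i = k"
  using distance_regular_geodesic[OF drg] distance_regular_intersection_sum[OF drg] assms(2)
  by metis

lemma distance_regular_b_pos:
  assumes drg: "distance_regular V E D k a b c" and "i < D"
  shows "0 < b i"
proof -
  obtain x p where "x \<in> V" and geo: "\<And>j. j \<le> D \<Longrightarrow> p j \<in> V \<and> gdist E x (p j) = j"
    and "E (p i) (p (Suc i))"
    using distance_regular_geodesic[OF drg] \<open>i < D\<close> by metis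
  have "finite V"
    using distance_regular_fin_conn_graph[OF drg] unfolding fin_conn_graph_def by simp
  moreover have "p (Suc i) \<in> {z\<in>V. E (p i) z \<and> gdist E x z = Suc (gdist E x (p i))}"
    using geo \<open>E (p i) (p (Suc i))\<close> \<open>i < D\<close> by simp
  ultimately have "0 < card {z\<in>V. E (p i) z \<and> gdist E x z = Suc (gdist E x (p i))}"
    by (auto simp: card_gt_0_iff)
  then show ?thesis
    using distance_regular_b[OF drg \<open>x \<in> V\<close>, of "p i"] geo[of i] \<open>i < D\<close> by simp
qed

lemma distance_regular_c_1:
  assumes drg: "distance_regular V E D k a b c" and "1 \<le> D"
  shows "c 1 = 1"
proof -
  obtain x p where "x \<in> V" and geo: "\<And>j. j \<le> D \<Longrightarrow> p j \<in> V \<and> gdist E x (p j) = j"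
    and "E (p 0) (p 1)"
    using distance_regular_geodesic[OF drg] \<open>1 \<le> D\<close> by (metis One_nat_def Suc_le_lessD)
  have conn: "\<And>y. y \<in> V \<Longrightarrow> \<exists>n. walk E x y n" and adj_sym: "\<And>x y. E x y \<Longrightarrow> E y x"
    using distance_regular_fin_conn_graph[OF drg] \<open>x \<in> V\<close> unfolding fin_conn_graph_def by auto
  have dist_0: "y = x" if "y \<in> V" "gdist E x y = 0" for y
    using conn[OF that(1)] gdist_eq_0D that(2) by metis
  then have "p 0 = x" using geo[of 0] by simp
  have "z = x" if "z \<in> V" "Suc (gdist E x z) = 1" for z
    using that dist_0 by simp
  then have "{z\<in>V. E (p 1) z \<and> Suc (gdist E x z) = gdist E x (p 1)} = {x}"
    using geo[of 1] \<open>1 \<le> D\<close> \<open>x \<in> V\<close> \<open>E (p 0) (p 1)\<close> \<open>p 0 = x\<close> adj_sym gdist_self by auto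
  then show ?thesis
    using distance_regular_c[OF drg \<open>x \<in> V\<close>, of "p 1"] geo[of 1] \<open>1 \<le> D\<close> by simp
qed

section \<open>Pseudo cosine sequences and the matrix M\<close>

lemma three_term_recurrence_zero:
  fixes w a b c :: "nat \<Rightarrow> real"
  assumes "w 0 = 0" and "\<And>i. i < n \<Longrightarrow> b i \<noteq> 0"
    and "\<And>i. i < n \<Longrightarrow>
      c i * (if i = 0 then 0 else w (i - 1)) + a i * w i + b i * w (Suc i) = \<theta> * w i"
    and "i \<le> n"
  shows "w i = 0"
  using \<open>i \<le> n\<close>
proof (induction i rule: less_induct)
  case (less i)
  show ?case
  proof (cases i)
    case (Suc j)
    then have "w j = 0" "(if j = 0 then 0 else w (j - 1)) = 0"
      using less by simp_all
    then have "b j * w (Suc j) = 0" using assms(3)[of j] less.prems Suc by simp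
    then show ?thesis using assms(2)[of j] less.prems Suc by simp
  qed (use assms(1) in simp)
qed

lemma pseudo_cosine_recurrence:
  "pseudo_cosine D a b c \<theta> \<sigma> \<Longrightarrow> i < D \<Longrightarrow>
    real (c i) * (if i = 0 then 0 else \<sigma> (i - 1)) + real (a i) * \<sigma> i + real (b i) * \<sigma> (Suc i)
      = \<theta> * \<sigma> i"
  unfolding pseudo_cosine_def by blast

lemma pseudo_cosine_unique:
  assumes b_pos: "\<And>i. i < D \<Longrightarrow> 0 < b i"
    and "pseudo_cosine D a b c \<theta> \<sigma>" "pseudo_cosine D a b c \<theta> \<sigma>'" and "i \<le> D"
  shows "\<sigma> i = \<sigma>' i"
proof -
  have "real (c j) * (if j = 0 then 0 else \<sigma> (j - 1) - \<sigma>' (j - 1)) + real (a j) * (\<sigma> j - \<sigma>' j)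
      + real (b j) * (\<sigma> (Suc j) - \<sigma>' (Suc j)) = \<theta> * (\<sigma> j - \<sigma>' j)" if "j < D" for j
  proof -
    from pseudo_cosine_recurrence[OF assms(2) that] pseudo_cosine_recurrence[OF assms(3) that]
    show ?thesis by (cases "j = 0") (simp_all add: right_diff_distrib; linarith)+
  qed
  note rec = this
  have "\<sigma> i - \<sigma>' i = 0"
  proof (rule three_term_recurrence_zero[where w = "\<lambda>i. \<sigma> i - \<sigma>' i" and n = D
        and a = "\<lambda>j. real (a j)" and b = "\<lambda>j. real (b j)" and c = "\<lambda>j. real (c j)"])
    show "\<sigma> 0 - \<sigma>' 0 = 0" using assms(2,3) unfolding pseudo_cosine_def by simp
    show "\<And>j. j < D \<Longrightarrow> real (b j) \<noteq> 0" using b_pos by simp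
    show "i \<le> D" by fact
  qed (fact rec)
  then show ?thesis by simp
qed

lemma pseudo_cosine_cong:
  "(\<And>i. i \<le> D \<Longrightarrow> \<sigma> i = \<sigma>' i) \<Longrightarrow> pseudo_cosine D a b c \<theta> \<sigma> \<longleftrightarrow> pseudo_cosine D a b c \<theta> \<sigma>'"
  unfolding pseudo_cosine_def by simp

fun cosine_seq :: "(nat \<Rightarrow> nat) \<Rightarrow> (nat \<Rightarrow> nat) \<Rightarrow> (nat \<Rightarrow> nat) \<Rightarrow> real \<Rightarrow> nat \<Rightarrow> real" where
  "cosine_seq a b c \<theta> 0 = 1"
| "cosine_seq a b c \<theta> (Suc 0) = (\<theta> - a 0) / b 0"
| "cosine_seq a b c \<theta> (Suc (Suc i)) =
    ((\<theta> - a (Suc i)) * cosine_seq a b c \<theta> (Suc i) - c (Suc i) * cosine_seq a b c \<theta> i) / b (Suc i)"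

lemma pseudo_cosine_cosine_seq:
  assumes "\<And>i. i < D \<Longrightarrow> 0 < b i"
  shows "pseudo_cosine D a b c \<theta> (cosine_seq a b c \<theta>)"
  unfolding pseudo_cosine_def
proof (intro conjI allI impI)
  fix i assume "i < D"
  then have "real (b i) \<noteq> 0" using assms by simp
  then show "real (c i) * (if i = 0 then 0 else cosine_seq a b c \<theta> (i - 1))
      + real (a i) * cosine_seq a b c \<theta> i + real (b i) * cosine_seq a b c \<theta> (Suc i)
      = \<theta> * cosine_seq a b c \<theta> i"
    by (cases i) (simp_all add: field_simps)
qed simp

lemma tight_pair_commute: "tight_pair D a b c \<theta> \<theta>' \<Longrightarrow> tight_pair D a b c \<theta>' \<theta>"
  unfolding tight_pair_def tight_seqs_def by (metis (no_types, lifting) mult.commute ext)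

lemma pseudo_cosine_valency:
  assumes "c 0 = 0" and "\<And>i. i < D \<Longrightarrow> c i + a i + b i = k"
  shows "pseudo_cosine D a b c k (\<lambda>_. 1)"
  unfolding pseudo_cosine_def
proof (intro conjI allI impI)
  fix i assume "i < D"
  then show "real (c i) * (if i = 0 then 0 else 1) + real (a i) * 1 + real (b i) * 1 = real k * 1"
    using assms(1) assms(2)[OF \<open>i < D\<close>] by (cases "i = 0") (simp_all flip: of_nat_add)
qed simp

lemma tight_pair_valency:
  assumes "c 0 = 0" and "\<And>i. i < D \<Longrightarrow> c i + a i + b i = k" and "\<And>i. i < D \<Longrightarrow> 0 < b i"
  shows "tight_pair D a b c \<theta> k"
proof -
  have \<sigma>: "pseudo_cosine D a b c \<theta> (cosine_seq a b c \<theta>)"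
    using assms(3) by (rule pseudo_cosine_cosine_seq)
  then have "tight_seqs D a b c (cosine_seq a b c \<theta>) (\<lambda>_. 1)"
    unfolding tight_seqs_def by (intro exI[of _ \<theta>]) simp
  moreover have "pseudo_cosine D a b c k (\<lambda>_. 1)"
    using assms(1,2) by (rule pseudo_cosine_valency)
  ultimately show ?thesis
    using \<sigma> unfolding tight_pair_def by blast
qed

lemma dim_row_matM [simp]: "dim_row (matM D k b c) = D"
  and dim_col_matM [simp]: "dim_col (matM D k b c) = D"
  by (simp_all add: matM_def)

lemma matM_carrier: "matM D k b c \<in> carrier_mat D D"
  by (rule carrier_matI) simp_all

lemma matM_mult_vec_nth:
  assumes "v \<in> carrier_vec D" and "i < D"
  shows "(matM D k b c *\<^sub>v v) $ i = real (c i) * (if i = 0 then 0 else v $ (i - 1))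
    + (if i = D - 1 then (real k - real (c (D - 1))) * v $ i else real (b i) * v $ Suc i)"
proof -
  have "(matM D k b c *\<^sub>v v) $ i = (\<Sum>j<D. matM D k b c $$ (i, j) * v $ j)"
    using assms by (simp add: matM_def scalar_prod_def lessThan_atLeast0)
  also have "\<dots> = (\<Sum>j<D. (if j = i - 1 then (if 0 < i then real (c i) * v $ j else 0) else 0)
      + (if j = i then (if i = D - 1 then (real k - real (c (D - 1))) * v $ j else 0) else 0)
      + (if j = Suc i then real (b i) * v $ j else 0))"
    using assms(2) by (intro sum.cong refl) (auto simp: matM_def)
  also have "\<dots> = (if 0 < i then real (c i) * v $ (i - 1) else 0)
      + (if i = D - 1 then (real k - real (c (D - 1))) * v $ i else 0)
      + (if Suc i < D then real (b i) * v $ Suc i else 0)"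
    using assms(2) by (simp add: sum.distrib)
  finally show ?thesis using assms(2) by auto
qed

section \<open>Almost bipartite intersection arrays\<close>

locale almost_bipartite_array =
  fixes D k :: nat and a b c :: "nat \<Rightarrow> nat"
  assumes D_ge_3: "3 \<le> D"
    and c_0: "c 0 = 0" and c_1: "c 1 = 1"
    and abc_sum: "i < D \<Longrightarrow> c i + a i + b i = k"
    and b_pos: "i < D \<Longrightarrow> 0 < b i"
    and a_zero: "i < D - 1 \<Longrightarrow> a i = 0"
begin

lemma pseudo_cosine_first_terms:
  fixes \<theta> :: real and \<sigma> :: "nat \<Rightarrow> real"
  assumes "pseudo_cosine D a b c \<theta> \<sigma>"
  shows "\<theta> = real k * \<sigma> 1" and "(real k - 1) * \<sigma> 2 = \<theta> * \<sigma> 1 - 1"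
proof -
  have "a 0 = 0" "a 1 = 0" "b 0 = k" "b 1 + 1 = k"
    using a_zero abc_sum[of 0] abc_sum[of 1] c_0 c_1 D_ge_3 by auto
  then have "real (b 1) = real k - 1" by linarith
  moreover have "\<sigma> 0 = 1" using assms unfolding pseudo_cosine_def by simp
  ultimately show "\<theta> = real k * \<sigma> 1" "(real k - 1) * \<sigma> 2 = \<theta> * \<sigma> 1 - 1"
    using pseudo_cosine_recurrence[OF assms, of 0] pseudo_cosine_recurrence[OF assms, of 1]
      \<open>a 0 = 0\<close> \<open>a 1 = 0\<close> \<open>b 0 = k\<close> c_1 D_ge_3 by (simp_all add: numeral_2_eq_2)
qed

lemma abs_eq_valency_if_tight_pair:
  fixes \<theta> \<theta>' :: real
  assumes "tight_pair D a b c \<theta> \<theta>'"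
  shows "\<bar>\<theta>\<bar> = k \<or> \<bar>\<theta>'\<bar> = k"
proof -
  obtain \<sigma> \<rho> \<eta> where \<sigma>: "pseudo_cosine D a b c \<theta> \<sigma>" and \<rho>: "pseudo_cosine D a b c \<theta>' \<rho>"
    and \<tau>: "pseudo_cosine D a b c \<eta> (\<lambda>i. \<sigma> i * \<rho> i)"
    using assms unfolding tight_pair_def tight_seqs_def by blast
  note first = pseudo_cosine_first_terms[OF \<sigma>] pseudo_cosine_first_terms[OF \<rho>]
    pseudo_cosine_first_terms[OF \<tau>]
  have "(real k * \<sigma> 1 ^ 2 - 1) * (real k * \<rho> 1 ^ 2 - 1) = ((real k - 1) * \<sigma> 2) * ((real k - 1) * \<rho> 2)"
    using first(1-4) by (simp add: power2_eq_square mult.assoc)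
  also have "\<dots> = (real k - 1) * ((real k - 1) * (\<sigma> 2 * \<rho> 2))"
    by (simp add: algebra_simps)
  also have "\<dots> = (real k - 1) * (real k * \<sigma> 1 ^ 2 * \<rho> 1 ^ 2 - 1)"
    unfolding first(6) first(5) by (simp add: algebra_simps power2_eq_square)
  finally have product: "(real k * \<sigma> 1 ^ 2 - 1) * (real k * \<rho> 1 ^ 2 - 1)
      = (real k - 1) * (real k * \<sigma> 1 ^ 2 * \<rho> 1 ^ 2 - 1)" .
  have "real k * (1 - \<sigma> 1 ^ 2) * (1 - \<rho> 1 ^ 2) = (real k * \<sigma> 1 ^ 2 - 1) * (real k * \<rho> 1 ^ 2 - 1)
      - (real k - 1) * (real k * \<sigma> 1 ^ 2 * \<rho> 1 ^ 2 - 1)"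
    by (simp add: algebra_simps)
  then have "real k * (1 - \<sigma> 1 ^ 2) * (1 - \<rho> 1 ^ 2) = 0"
    unfolding product by simp
  moreover have "0 < k" using b_pos[of 0] abc_sum[of 0] c_0 D_ge_3 by simp
  ultimately have "\<bar>\<sigma> 1\<bar> = 1 \<or> \<bar>\<rho> 1\<bar> = 1"
    by (auto simp: power2_eq_1_iff)
  then show ?thesis using first by (auto simp: abs_mult)
qed

(* (-1)^i solves the recurrence of -k wherever a_i = 0; the last term is then forced by row D - 1. *)
definition neg_valency_cosine :: "nat \<Rightarrow> real" where
  "neg_valency_cosine i =
    (if i < D then (-1) ^ i else (-1) ^ D * (1 + 2 * real (a (D - 1)) / real (b (D - 1))))"

lemma neg_valency_cosine_Suc: "Suc i < D \<Longrightarrow> neg_valency_cosine (Suc i) = - neg_valency_cosine i"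
  by (simp add: neg_valency_cosine_def)

lemma neg_valency_cosine_top:
  shows "neg_valency_cosine (D - 2) = (-1) ^ D" and "neg_valency_cosine (D - 1) = - ((-1) ^ D)"
    and "real (b (D - 1)) * neg_valency_cosine D
      = (-1) ^ D * (real (b (D - 1)) + 2 * real (a (D - 1)))"
proof -
  have "D = (D - 2) + 2" using D_ge_3 by simp
  then have "(-1::real) ^ D = (-1) ^ (D - 2) * (-1) ^ 2" by (metis power_add)
  then show "neg_valency_cosine (D - 2) = (-1) ^ D"
    using D_ge_3 by (simp add: neg_valency_cosine_def)
  then show "neg_valency_cosine (D - 1) = - ((-1) ^ D)"
    using neg_valency_cosine_Suc[of "D - 2"] D_ge_3 by (simp add: Suc_diff_Suc numeral_2_eq_2)
  show "real (b (D - 1)) * neg_valency_cosine D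
      = (-1) ^ D * (real (b (D - 1)) + 2 * real (a (D - 1)))"
    using b_pos[of "D - 1"] D_ge_3 by (simp add: neg_valency_cosine_def field_simps)
qed

lemma neg_valency_product_recurrence:
  assumes \<rho>: "pseudo_cosine D a b c \<theta> \<rho>" and "i < D"
  shows "real (c i) * (if i = 0 then 0 else \<rho> (i - 1) * neg_valency_cosine (i - 1))
      + real (a i) * (\<rho> i * neg_valency_cosine i)
      + real (b i) * (\<rho> (Suc i) * neg_valency_cosine (Suc i))
    = - \<theta> * (\<rho> i * neg_valency_cosine i)
      + (if i = D - 1 then 2 * (-1) ^ D * real (a i) * (\<rho> D - \<rho> i) else 0)"
    (is "?lhs = ?rhs")
proof (cases "i < D - 1")
  case True
  let ?\<nu> = neg_valency_cosine and ?prev = "if i = 0 then 0 else \<rho> (i - 1)"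
  have "(if i = 0 then 0 else \<rho> (i - 1) * ?\<nu> (i - 1)) = - ?\<nu> i * ?prev"
  proof (cases i)
    case (Suc j)
    then show ?thesis using neg_valency_cosine_Suc[of j] True by simp
  qed simp
  moreover have "?\<nu> (Suc i) = - ?\<nu> i" using True by (simp add: neg_valency_cosine_Suc)
  ultimately have "?lhs = - (real (c i) * ?prev + real (b i) * \<rho> (Suc i)) * ?\<nu> i"
    using a_zero[OF True] by (simp add: algebra_simps)
  also have "\<dots> = - \<theta> * (\<rho> i * ?\<nu> i)"
    using pseudo_cosine_recurrence[OF \<rho> \<open>i < D\<close>] a_zero[OF True] by simp
  finally show ?thesis using True by simp
next
  case False
  then have i: "i = D - 1" "i - 1 = D - 2" "Suc i = D" "i \<noteq> 0" using \<open>i < D\<close> D_ge_3 by auto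
  let ?\<nu> = neg_valency_cosine and ?s = "(-1) ^ D :: real"
  have "?\<nu> (i - 1) = ?s" "?\<nu> i = - ?s"
    using neg_valency_cosine_top(1,2) i(1,2) by simp_all
  moreover have "real (b i) * ?\<nu> (Suc i) = ?s * (real (b i) + 2 * real (a i))"
    unfolding i(3) unfolding i(1) by (rule neg_valency_cosine_top(3))
  ultimately have "?lhs = real (c i) * \<rho> (i - 1) * ?s - real (a i) * \<rho> i * ?s
      + \<rho> (Suc i) * (?s * (real (b i) + 2 * real (a i)))"
    using i(4) by (simp add: mult.left_commute[of "real (b i)"])
  also have "\<dots> = real (c i) * \<rho> (i - 1) * ?s - real (a i) * \<rho> i * ?s
      + \<rho> D * (?s * (real (b i) + 2 * real (a i)))"
    unfolding i(3) ..
  also have "\<dots> = ?s * (real (c i) * \<rho> (i - 1) + real (a i) * \<rho> i + real (b i) * \<rho> D)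
      + 2 * ?s * real (a i) * (\<rho> D - \<rho> i)"
    by (simp add: algebra_simps)
  also have "\<dots> = ?rhs"
    using pseudo_cosine_recurrence[OF \<rho> \<open>i < D\<close>] neg_valency_cosine_top(2) i by simp
  finally show ?thesis .
qed

lemma pseudo_cosine_neg_valency: "pseudo_cosine D a b c (- real k) neg_valency_cosine"
  unfolding pseudo_cosine_def
proof (intro conjI allI impI)
  show "neg_valency_cosine 0 = 1" using D_ge_3 by (simp add: neg_valency_cosine_def)
  have one: "pseudo_cosine D a b c k (\<lambda>_. 1)"
    using c_0 abc_sum by (rule pseudo_cosine_valency)
  fix i assume "i < D"
  then show "real (c i) * (if i = 0 then 0 else neg_valency_cosine (i - 1))
      + real (a i) * neg_valency_cosine i + real (b i) * neg_valency_cosine (Suc i)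
      = - real k * neg_valency_cosine i"
    using neg_valency_product_recurrence[OF one \<open>i < D\<close>] D_ge_3 by (simp split: if_splits)
qed

lemma pseudo_cosine_times_neg_valency:
  assumes \<rho>: "pseudo_cosine D a b c \<theta> \<rho>" and "\<rho> D = \<rho> (D - 1)"
  shows "pseudo_cosine D a b c (- \<theta>) (\<lambda>i. \<rho> i * neg_valency_cosine i)"
  unfolding pseudo_cosine_def
proof (intro conjI allI impI)
  show "\<rho> 0 * neg_valency_cosine 0 = 1"
    using \<rho> D_ge_3 by (simp add: pseudo_cosine_def neg_valency_cosine_def)
  fix i assume "i < D"
  then show "real (c i) * (if i = 0 then 0 else \<rho> (i - 1) * neg_valency_cosine (i - 1))
      + real (a i) * (\<rho> i * neg_valency_cosine i)
      + real (b i) * (\<rho> (Suc i) * neg_valency_cosine (Suc i))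
      = - \<theta> * (\<rho> i * neg_valency_cosine i)"
    using neg_valency_product_recurrence[OF \<rho> \<open>i < D\<close>] assms(2) by simp
qed

lemma last_eq_if_pseudo_cosine_times_neg_valency:
  assumes \<rho>: "pseudo_cosine D a b c \<theta> \<rho>"
    and \<tau>: "pseudo_cosine D a b c \<eta> (\<lambda>i. \<rho> i * neg_valency_cosine i)"
    and "a (D - 1) \<noteq> 0"
  shows "\<rho> D = \<rho> (D - 1)"
proof -
  have "\<rho> 0 * neg_valency_cosine 0 = 1" using \<tau> unfolding pseudo_cosine_def by simp
  then have "\<eta> = - \<theta>"
    using pseudo_cosine_recurrence[OF \<tau>, of 0] neg_valency_product_recurrence[OF \<rho>, of 0] D_ge_3
    by simp
  then have "2 * (-1) ^ D * real (a (D - 1)) * (\<rho> D - \<rho> (D - 1)) = 0"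
    using pseudo_cosine_recurrence[OF \<tau>, of "D - 1"]
      neg_valency_product_recurrence[OF \<rho>, of "D - 1"] D_ge_3
    by simp
  then show ?thesis using assms(3) by simp
qed

lemma matM_mult_vec_cosine:
  assumes \<sigma>: "pseudo_cosine D a b c \<theta> \<sigma>" and "i < D"
  shows "(matM D k b c *\<^sub>v vec D \<sigma>) $ i
    = \<theta> * \<sigma> i + (if i = D - 1 then real (b i) * (\<sigma> i - \<sigma> D) else 0)"
proof -
  have "real k - real (c i) = real (a i) + real (b i)" using abc_sum[OF \<open>i < D\<close>] by linarith
  moreover have "(matM D k b c *\<^sub>v vec D \<sigma>) $ i = real (c i) * (if i = 0 then 0 else \<sigma> (i - 1))
      + (if i = D - 1 then (real k - real (c (D - 1))) * \<sigma> i else real (b i) * \<sigma> (Suc i))"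
    using matM_mult_vec_nth[of "vec D \<sigma>" D i k b c] \<open>i < D\<close> by auto
  ultimately show ?thesis
    using pseudo_cosine_recurrence[OF \<sigma> \<open>i < D\<close>] a_zero[of i] \<open>i < D\<close>
    by (cases "i = D - 1") (auto simp: algebra_simps)
qed

lemma eigenvector_matM_recurrence:
  assumes "eigenvector (matM D k b c) v \<theta>" and "i < D - 1"
  shows "real (c i) * (if i = 0 then 0 else v $ (i - 1)) + real (b i) * v $ Suc i = \<theta> * v $ i"
proof -
  have "v \<in> carrier_vec D" and "(matM D k b c *\<^sub>v v) $ i = (\<theta> \<cdot>\<^sub>v v) $ i"
    using assms(1) unfolding eigenvector_def by simp_all
  then show ?thesis using matM_mult_vec_nth[of v D i k b c] assms(2) by simp
qed

lemma eigenvector_matM_eq_smult_cosine: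
  assumes v: "eigenvector (matM D k b c) v \<theta>" and \<sigma>: "pseudo_cosine D a b c \<theta> \<sigma>"
  shows "v = v $ 0 \<cdot>\<^sub>v vec D \<sigma>"
proof -
  have "v \<in> carrier_vec D" using v unfolding eigenvector_def by simp
  define w where "w i = v $ i - v $ 0 * \<sigma> i" for i
  have "real (c i) * (if i = 0 then 0 else w (i - 1)) + 0 * w i + real (b i) * w (Suc i) = \<theta> * w i"
    if "i < D - 1" for i
  proof -
    define v' where "v' = (if i = 0 then 0 else v $ (i - 1))"
    define \<sigma>' where "\<sigma>' = (if i = 0 then 0 else \<sigma> (i - 1))"
    have v_row: "real (c i) * v' + real (b i) * v $ Suc i = \<theta> * v $ i"
      using eigenvector_matM_recurrence[OF v that] unfolding v'_def .
    have \<sigma>_row: "v $ 0 * (real (c i) * \<sigma>' + real (b i) * \<sigma> (Suc i)) = v $ 0 * (\<theta> * \<sigma> i)"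
      using pseudo_cosine_recurrence[OF \<sigma>, of i] a_zero[OF that] that unfolding \<sigma>'_def by simp
    have w_prev: "(if i = 0 then 0 else w (i - 1)) = v' - v $ 0 * \<sigma>'"
      unfolding v'_def \<sigma>'_def w_def by simp
    show ?thesis
      unfolding w_prev unfolding w_def using v_row \<sigma>_row by (simp add: algebra_simps)
  qed
  note rec = this
  have "w i = 0" if "i < D" for i
  proof (rule three_term_recurrence_zero[where w = w and n = "D - 1" and a = "\<lambda>_. 0"
        and b = "\<lambda>j. real (b j)" and c = "\<lambda>j. real (c j)"])
    show "w 0 = 0" using \<sigma> unfolding w_def pseudo_cosine_def by simp
    show "\<And>j. j < D - 1 \<Longrightarrow> real (b j) \<noteq> 0" using b_pos by simp
    show "i \<le> D - 1" using that by simp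
  qed (fact rec)
  note w_zero = this
  show ?thesis
  proof (rule eq_vecI)
    fix i assume "i < dim_vec (v $ 0 \<cdot>\<^sub>v vec D \<sigma>)"
    then show "v $ i = (v $ 0 \<cdot>\<^sub>v vec D \<sigma>) $ i"
      using w_zero[of i] unfolding w_def by simp
  qed (use \<open>v \<in> carrier_vec D\<close> in simp)
qed

lemma eigenvalue_matM_iff:
  assumes \<sigma>: "pseudo_cosine D a b c \<theta> \<sigma>"
  shows "eigenvalue (matM D k b c) \<theta> \<longleftrightarrow> \<sigma> D = \<sigma> (D - 1)"
proof
  let ?M = "matM D k b c"
  assume "eigenvalue ?M \<theta>"
  then obtain v where v: "eigenvector ?M v \<theta>" unfolding eigenvalue_def by blast
  then have "v \<noteq> 0\<^sub>v D" and Mv: "?M *\<^sub>v v = \<theta> \<cdot>\<^sub>v v"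
    unfolding eigenvector_def by simp_all
  have v_eq: "v = v $ 0 \<cdot>\<^sub>v vec D \<sigma>" by (rule eigenvector_matM_eq_smult_cosine[OF v \<sigma>])
  have "v $ 0 \<noteq> 0"
  proof
    assume "v $ 0 = 0"
    then have "v = 0 \<cdot>\<^sub>v vec D \<sigma>" using v_eq by simp
    also have "\<dots> = 0\<^sub>v D" by (rule eq_vecI) simp_all
    finally show False using \<open>v \<noteq> 0\<^sub>v D\<close> by contradiction
  qed
  have "v $ 0 \<cdot>\<^sub>v (\<theta> \<cdot>\<^sub>v vec D \<sigma>) = \<theta> \<cdot>\<^sub>v (v $ 0 \<cdot>\<^sub>v vec D \<sigma>)"
    by (rule eq_vecI) (simp_all add: mult.left_commute)
  also have "\<dots> = ?M *\<^sub>v (v $ 0 \<cdot>\<^sub>v vec D \<sigma>)" by (simp only: v_eq[symmetric] Mv)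
  also have "\<dots> = v $ 0 \<cdot>\<^sub>v (?M *\<^sub>v vec D \<sigma>)" by (rule mult_mat_vec[OF matM_carrier]) simp
  finally have "(v $ 0 \<cdot>\<^sub>v (\<theta> \<cdot>\<^sub>v vec D \<sigma>)) $ (D - 1) = (v $ 0 \<cdot>\<^sub>v (?M *\<^sub>v vec D \<sigma>)) $ (D - 1)"
    by simp
  then have "v $ 0 * (\<theta> * \<sigma> (D - 1)) = v $ 0 * (?M *\<^sub>v vec D \<sigma>) $ (D - 1)"
    using D_ge_3 by simp
  then have "(?M *\<^sub>v vec D \<sigma>) $ (D - 1) = \<theta> * \<sigma> (D - 1)" using \<open>v $ 0 \<noteq> 0\<close> by simp
  then have "real (b (D - 1)) * (\<sigma> (D - 1) - \<sigma> D) = 0"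
    using matM_mult_vec_cosine[OF \<sigma>, of "D - 1"] D_ge_3 by simp
  then show "\<sigma> D = \<sigma> (D - 1)" using b_pos[of "D - 1"] D_ge_3 by simp
next
  assume last: "\<sigma> D = \<sigma> (D - 1)"
  have "matM D k b c *\<^sub>v vec D \<sigma> = \<theta> \<cdot>\<^sub>v vec D \<sigma>"
  proof (rule eq_vecI)
    fix i assume "i < dim_vec (\<theta> \<cdot>\<^sub>v vec D \<sigma>)"
    then show "(matM D k b c *\<^sub>v vec D \<sigma>) $ i = (\<theta> \<cdot>\<^sub>v vec D \<sigma>) $ i"
      using matM_mult_vec_cosine[OF \<sigma>, of i] last by auto
  qed simp
  moreover have "vec D \<sigma> \<noteq> 0\<^sub>v D"
  proof
    assume "vec D \<sigma> = 0\<^sub>v D"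
    then have "vec D \<sigma> $ 0 = 0\<^sub>v D $ 0" by simp
    then show False using \<sigma> D_ge_3 by (simp add: pseudo_cosine_def)
  qed
  ultimately show "eigenvalue (matM D k b c) \<theta>"
    unfolding eigenvalue_def eigenvector_def by (intro exI[of _ "vec D \<sigma>"]) simp
qed

lemma tight_pair_neg_valency_if_eigenvalue:
  assumes "eigenvalue (matM D k b c) \<theta>"
  shows "tight_pair D a b c \<theta> (- real k)"
proof -
  have \<sigma>: "pseudo_cosine D a b c \<theta> (cosine_seq a b c \<theta>)"
    using b_pos by (rule pseudo_cosine_cosine_seq)
  with assms have "cosine_seq a b c \<theta> D = cosine_seq a b c \<theta> (D - 1)"
    by (simp add: eigenvalue_matM_iff)
  then have "tight_seqs D a b c (cosine_seq a b c \<theta>) neg_valency_cosine"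
    unfolding tight_seqs_def using pseudo_cosine_times_neg_valency[OF \<sigma>] by blast
  then show ?thesis
    unfolding tight_pair_def using \<sigma> pseudo_cosine_neg_valency by blast
qed

lemma eigenvalue_if_tight_pair_neg_valency:
  assumes "tight_pair D a b c \<theta> (- real k)" and "a (D - 1) \<noteq> 0"
  shows "eigenvalue (matM D k b c) \<theta>"
proof -
  obtain \<sigma> \<rho> \<eta> where \<sigma>: "pseudo_cosine D a b c \<theta> \<sigma>" and \<rho>: "pseudo_cosine D a b c (- real k) \<rho>"
    and \<tau>: "pseudo_cosine D a b c \<eta> (\<lambda>i. \<sigma> i * \<rho> i)"
    using assms(1) unfolding tight_pair_def tight_seqs_def by blast
  have "\<rho> i = neg_valency_cosine i" if "i \<le> D" for i
    using pseudo_cosine_unique[OF b_pos \<rho> pseudo_cosine_neg_valency that] .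
  then have "pseudo_cosine D a b c \<eta> (\<lambda>i. \<sigma> i * neg_valency_cosine i)"
    using \<tau> pseudo_cosine_cong[of D "\<lambda>i. \<sigma> i * \<rho> i"] by simp
  then have "\<sigma> D = \<sigma> (D - 1)"
    using last_eq_if_pseudo_cosine_times_neg_valency[OF \<sigma> _ assms(2)] by blast
  then show ?thesis using eigenvalue_matM_iff[OF \<sigma>] by blast
qed

end

lemma distance_regular_almost_bipartite_array:
  assumes drg: "distance_regular V E D k a b c" and "3 \<le> D" and "\<forall>i. i \<le> D - 2 \<longrightarrow> a i = 0"
  shows "almost_bipartite_array D k a b c"
proof
  show "3 \<le> D" by fact
  show "c 0 = 0" using drg by (rule distance_regular_c_0)
  show "c 1 = 1" using drg by (rule distance_regular_c_1) (use \<open>3 \<le> D\<close> in simp)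
  show "c i + a i + b i = k" if "i < D" for i
    using drg by (rule distance_regular_abc_sum) (use that in simp)
  show "0 < b i" if "i < D" for i
    using drg that by (rule distance_regular_b_pos)
  show "a i = 0" if "i < D - 1" for i
    using assms(3) that by simp
qed

theorem theorem9p4:
  fixes V :: "'v set" and E :: "'v \<Rightarrow> 'v \<Rightarrow> bool"
    and D k :: nat and a b c :: "nat \<Rightarrow> nat"
  assumes drg: "distance_regular V E D k a b c"
    and D3: "D \<ge> 3"
    and a0: "\<forall>i. i \<le> D - 2 \<longrightarrow> a i = 0"
    and aD: "a (D - 1) \<noteq> 0"
  shows "(\<forall>\<theta>::real. tight_pair D a b c \<theta> (real k))
    \<and> (\<forall>\<theta>::real. eigenvalue (matM D k b c) \<theta> \<longrightarrow> tight_pair D a b c \<theta> (- real k))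
    \<and> (\<forall>\<theta> \<theta>'::real. tight_pair D a b c \<theta> \<theta>' \<longrightarrow>
          \<theta> = real k \<or> \<theta>' = real k
          \<or> (\<theta> = - real k \<and> eigenvalue (matM D k b c) \<theta>')
          \<or> (\<theta>' = - real k \<and> eigenvalue (matM D k b c) \<theta>))"
proof -
  interpret almost_bipartite_array D k a b c
    using drg D3 a0 by (rule distance_regular_almost_bipartite_array)
  have "tight_pair D a b c \<theta> (real k)" for \<theta>
    using c_0 abc_sum b_pos by (rule tight_pair_valency)
  moreover have "tight_pair D a b c \<theta> (- real k)" if "eigenvalue (matM D k b c) \<theta>" for \<theta>
    using that by (rule tight_pair_neg_valency_if_eigenvalue)
  moreover have "\<theta> = real k \<or> \<theta>' = real k
      \<or> (\<theta> = - real k \<and> eigenvalue (matM D k b c) \<theta>')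
      \<or> (\<theta>' = - real k \<and> eigenvalue (matM D k b c) \<theta>)"
    if tight: "tight_pair D a b c \<theta> \<theta>'" for \<theta> \<theta>'
  proof -
    have "\<theta> = real k \<or> \<theta> = - real k \<or> \<theta>' = real k \<or> \<theta>' = - real k"
      using abs_eq_valency_if_tight_pair[OF tight] by (auto simp: abs_eq_iff')
    moreover have "eigenvalue (matM D k b c) \<theta>" if "\<theta>' = - real k"
      using tight that aD by (intro eigenvalue_if_tight_pair_neg_valency) simp_all
    moreover have "eigenvalue (matM D k b c) \<theta>'" if "\<theta> = - real k"
      using tight_pair_commute[OF tight] that aD by (intro eigenvalue_if_tight_pair_neg_valency) simp_all
    ultimately show ?thesis by blast
  qed
  ultimately show ?thesis by blast
qed

end
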